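(* Let $(\mathcal{M},g,\nabla,\nabla^* )$ be an $n$-dimensional smooth Riemannian manifold with torsion-free affine connections $\nabla,\nabla^*$ dual with respect to $g$, let $f:\mathcal{M}\to\mathbb{R}$ be smooth, and let $(\varphi,\xi)$ be a coordinate chart on $\mathcal{M}$. Assume there is a point $p^\star$ (in the chart domain) with $\operatorname{grad} f(p^\star)=0$ and $\mathrm{Hess}^*f(p^\star)\succ0$, i.e. $\langle\mathrm{Hess}^*f(p^\star)[X],X\rangle>0$ for all nonzero $X\in T_{p^\star}\mathcal{M}$. Then there exists a neighborhood $\mathcal{U}\subset\mathcal{M}$ of $p^\star$ such that for every initial point $p_0\in\mathcal{U}$, the coordinate-based dual Riemannian Newton method generates an infinite sequence $(p_k)$ that converges quadratically to $p^\star$.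
   Context: Duality: $X\langle Y,Z\rangle=\langle\nabla_XY,Z\rangle+\langle Y,\nabla^*_XZ\rangle$ for all vector fields. $\operatorname{grad} f(p)$ is the unique vector with $Df(p)[X]=\langle\operatorname{grad} f(p),X\rangle$; $\mathrm{Hess}^*f(p)[X]=\nabla^*_X\operatorname{grad} f$. In the chart, with $\xi^p=\varphi(p)$: $\mathbf{G}(\xi)=[g_{ij}(\xi)]$, $\boldsymbol{\nabla}f(\xi)$ the vector of partials of $f\circ\varphi^{-1}$, $a(\xi)=\mathbf{G}^{-1}(\xi)\boldsymbol{\nabla}f(\xi)$, Christoffel symbols $\Gamma^k_{ij}$ of $\nabla$ and $\Gamma^{*}_{ij}{}^k$ of $\nabla^*$ defined by $\nabla_{\partial/\partial\xi_i}\partial/\partial\xi_j=\sum_k\Gamma^k_{ij}\partial/\partial\xi_k$ and $\nabla^*_{\partial/\partial\xi_i}\partial/\partial\xi_j=\sum_k\Gamma^{*}_{ij}{}^k\partial/\partial\xi_k$, and $\mathbf{H}^*_{ij}(\xi)=\partial a_j/\partial\xi_i+\sum_k a_k(\xi)\Gamma^{*}_{ik}{}^j(\xi)$. The coordinate-based dual Riemannian Newton method iterates, from $\xi^{p_k}$: solve $\mathbf{H}^{*\top}(\xi^{p_k})\boldsymbol{\beta}=-\mathbf{G}^{-1}(\xi^{p_k})\boldsymbol{\nabla}f(\xi^{p_k})$ for $\boldsymbol{\beta}$, then set $\xi^{p_{k+1}}_i=\xi^{p_k}_i+\beta_i-\tfrac12\sum_{j,k}\Gamma^i_{jk}(\xi^{p_k})\beta_j\beta_k$.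 Quadratic convergence means $\xi^{p_k}\to\xi^{p^\star}$ and there is a constant $C$ with $\|\xi^{p_{k+1}}-\xi^{p^\star}\|\le C\|\xi^{p_k}-\xi^{p^\star}\|^2$ for all $k$. *)

theory Defs
  imports "HOL-Analysis.Analysis"
begin

text \<open>Everything is expressed in the coordinate chart: points of the chart domain are
  identified with their coordinates \<open>\<xi> \<in> \<Omega> \<subseteq> real^'n\<close> (\<open>\<Omega>\<close> open).\<close>

fun Ck_on :: "nat \<Rightarrow> (real^'n \<Rightarrow> real) \<Rightarrow> (real^'n) set \<Rightarrow> bool" where
  "Ck_on 0 h S = continuous_on S h"
| "Ck_on (Suc k) h S =
     (h differentiable_on S \<and> (\<forall>v. Ck_on k (\<lambda>x. frechet_derivative h (at x) v) S))"

definition smooth_on :: "(real^'n \<Rightarrow> real) \<Rightarrow> (real^'n) set \<Rightarrow> bool" where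
  "smooth_on h S \<longleftrightarrow> (\<forall>k. Ck_on k h S)"

definition partial :: "'n::finite \<Rightarrow> (real^'n \<Rightarrow> real) \<Rightarrow> real^'n \<Rightarrow> real" where
  "partial i h x = frechet_derivative h (at x) (axis i 1)"

definition coord_grad :: "(real^'n \<Rightarrow> real) \<Rightarrow> real^'n \<Rightarrow> real^'n" where
  "coord_grad f x = (\<chi> i. partial i f x)"

text \<open>a(xi) = G(xi)^{-1} nabla f(xi): coordinates of the Riemannian gradient\<close>
definition agrad :: "(real^'n \<Rightarrow> real^'n^'n) \<Rightarrow> (real^'n \<Rightarrow> real) \<Rightarrow> real^'n \<Rightarrow> real^'n" where
  "agrad G f x = matrix_inv (G x) *v coord_grad f x"

text \<open>Christoffel symbols are encoded as \<open>Gam x i j k = \<Gamma>^k_{ij}(x)\<close> and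
  \<open>Gs x i j k = \<Gamma>*_{ij}^k(x)\<close>.
  \<open>Hstar ... x $ i $ j = \<partial>a_j/\<partial>\<xi>_i + \<Sum>_k a_k \<Gamma>*_{ik}^j\<close>.\<close>
definition Hstar :: "(real^'n \<Rightarrow> real^'n^'n) \<Rightarrow> (real^'n \<Rightarrow> 'n \<Rightarrow> 'n \<Rightarrow> 'n \<Rightarrow> real)
     \<Rightarrow> (real^'n \<Rightarrow> real) \<Rightarrow> real^'n \<Rightarrow> real^'n^'n" where
  "Hstar G Gs f x = (\<chi> i j. partial i (\<lambda>y. agrad G f y $ j) x
                          + (\<Sum>k\<in>UNIV. agrad G f x $ k * Gs x i k j))"

definition newton_beta :: "(real^'n \<Rightarrow> real^'n^'n) \<Rightarrow> (real^'n \<Rightarrow> 'n \<Rightarrow> 'n \<Rightarrow> 'n \<Rightarrow> real)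
     \<Rightarrow> (real^'n \<Rightarrow> real) \<Rightarrow> real^'n \<Rightarrow> real^'n" where
  "newton_beta G Gs f x = matrix_inv (transpose (Hstar G Gs f x)) *v (- agrad G f x)"

definition newton_step :: "(real^'n \<Rightarrow> real^'n^'n) \<Rightarrow> (real^'n \<Rightarrow> 'n \<Rightarrow> 'n \<Rightarrow> 'n \<Rightarrow> real)
     \<Rightarrow> (real^'n \<Rightarrow> 'n \<Rightarrow> 'n \<Rightarrow> 'n \<Rightarrow> real) \<Rightarrow> (real^'n \<Rightarrow> real) \<Rightarrow> real^'n \<Rightarrow> real^'n" where
  "newton_step G Gam Gs f x =
     (let \<beta> = newton_beta G Gs f x in
      \<chi> i. x $ i + \<beta> $ i - (1/2) * (\<Sum>j\<in>UNIV. \<Sum>k\<in>UNIV. Gam x j k i * \<beta> $ j * \<beta> $ k))"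

end

theory Submission
  imports Defs
begin

text \<open>Write \<open>e = \<xi> - \<xi>s\<close>, \<open>a = G\<inverse> \<nabla>f\<close> and \<open>M = (H\<^sup>*)\<^sup>T\<close>. One Newton step maps \<open>\<xi>\<close> to
  \<open>\<xi> + \<beta> - q\<close> with \<open>M \<beta> = -a\<close> and \<open>q\<close> quadratic in \<open>\<beta>\<close>, so the new error is
  \<open>M\<inverse>(M e - a) - q\<close>. Split \<open>M\<close> into the Jacobian of \<open>a\<close> and the Christoffel term
  \<open>Q = (\<Sum>\<^sub>k a\<^sub>k \<Gamma>*\<^sub>i\<^sub>k\<^sup>j)\<close>. Since \<open>a(\<xi>s) = 0\<close>, second order Taylor expansion of \<open>a\<close> makes
  \<open>Da e - a\<close> quadratic in \<open>e\<close>, and \<open>Q e\<close> is quadratic because \<open>a = O(e)\<close>. By continuity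
  \<open>M\<close> stays uniformly invertible near \<open>\<xi>s\<close>, hence \<open>\<beta> = O(e)\<close> and the new error is \<open>O(e\<^sup>2)\<close>;
  in a small ball this also halves the error at each step, which gives convergence.
  Besides smoothness, only the positivity of \<open>G\<close> (to invert it) and the invertibility of
  \<open>H\<^sup>*(\<xi>s)\<close> are used.\<close>

lemma Ck_on_SucD: "Ck_on (Suc k) h S \<Longrightarrow> Ck_on k h S"
  by (induction k arbitrary: h) (auto simp: differentiable_imp_continuous_on)

lemma Ck_on_imp_continuous_on: "Ck_on k h S \<Longrightarrow> continuous_on S h"
  by (cases k) (auto simp: differentiable_imp_continuous_on)

lemma Ck_on_imp_isCont:
  assumes "open S" "x \<in> S" "Ck_on k h S"
  shows "isCont h x"
  using Ck_on_imp_continuous_on[OF assms(3)] assms(1,2) continuous_on_eq_continuous_at by blast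

lemma Ck_on_partial: "Ck_on (Suc k) h S \<Longrightarrow> Ck_on k (partial i h) S"
  by (simp add: partial_def[abs_def])

lemma smooth_on_imp_Ck_on: "smooth_on h S \<Longrightarrow> Ck_on k h S"
  by (simp add: smooth_on_def)

lemma Ck_on_Suc_has_derivative:
  assumes "open S" "Ck_on (Suc k) h S" "x \<in> S"
  shows "(h has_derivative frechet_derivative h (at x)) (at x)"
  using assms by (auto simp: differentiable_on_eq_differentiable_at frechet_derivative_works)

lemma Ck_on_cong:
  assumes "open S" "\<And>x. x \<in> S \<Longrightarrow> h x = g x" "Ck_on k h S"
  shows "Ck_on k g S"
  using assms(2,3)
proof (induction k arbitrary: h g)
  case 0
  then show ?case using continuous_on_cong by force
next
  case (Suc k)
  have dg: "(g has_derivative frechet_derivative h (at x)) (at x)" if "x \<in> S" for x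
    using has_derivative_transform_within_open[OF Ck_on_Suc_has_derivative[OF assms(1) Suc.prems(2) that]
        assms(1) that Suc.prems(1)] .
  then have "g differentiable_on S"
    using assms(1) by (auto simp: differentiable_on_eq_differentiable_at differentiable_def)
  moreover have "Ck_on k (\<lambda>x. frechet_derivative g (at x) v) S" for v
  proof (rule Suc.IH)
    show "frechet_derivative h (at x) v = frechet_derivative g (at x) v" if "x \<in> S" for x
      using frechet_derivative_at[OF dg[OF that]] by simp
    show "Ck_on k (\<lambda>x. frechet_derivative h (at x) v) S"
      using Suc.prems(2) by simp
  qed
  ultimately show ?case by simp
qed

lemma Ck_on_SucI:
  assumes "open S" "\<And>x. x \<in> S \<Longrightarrow> (h has_derivative D x) (at x)" "\<And>v. Ck_on k (\<lambda>x. D x v) S"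
  shows "Ck_on (Suc k) h S"
proof -
  have "frechet_derivative h (at x) v = D x v" if "x \<in> S" for x v
    using frechet_derivative_at[OF assms(2)[OF that]] by simp
  moreover have "h differentiable_on S"
    using assms(1,2) by (auto simp: differentiable_on_eq_differentiable_at differentiable_def)
  ultimately show ?thesis
    using Ck_on_cong[OF assms(1) _ assms(3)] by simp
qed

lemma Ck_on_const: "Ck_on k (\<lambda>x. c) S"
  by (induction k arbitrary: c) auto

lemma Ck_on_add:
  assumes "open S"
  shows "Ck_on k h S \<Longrightarrow> Ck_on k g S \<Longrightarrow> Ck_on k (\<lambda>x. h x + g x) S"
proof (induction k arbitrary: h g)
  case 0
  then show ?case by (simp add: continuous_on_add)
next
  case (Suc k)
  note D = Ck_on_Suc_has_derivative[OF assms]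
  show ?case
  proof (rule Ck_on_SucI[OF assms])
    show "((\<lambda>x. h x + g x) has_derivative
        (\<lambda>v. frechet_derivative h (at x) v + frechet_derivative g (at x) v)) (at x)" if "x \<in> S" for x
      using D[OF Suc.prems(1) that] D[OF Suc.prems(2) that] by (rule has_derivative_add)
    show "Ck_on k (\<lambda>x. frechet_derivative h (at x) v + frechet_derivative g (at x) v) S" for v
      using Suc by simp
  qed
qed

lemma Ck_on_mult:
  assumes "open S"
  shows "Ck_on k h S \<Longrightarrow> Ck_on k g S \<Longrightarrow> Ck_on k (\<lambda>x. h x * g x) S"
proof (induction k arbitrary: h g)
  case 0
  then show ?case by (simp add: continuous_on_mult)
next
  case (Suc k)
  note D = Ck_on_Suc_has_derivative[OF assms]
  show ?case
  proof (rule Ck_on_SucI[OF assms])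
    show "((\<lambda>x. h x * g x) has_derivative
        (\<lambda>v. h x * frechet_derivative g (at x) v + frechet_derivative h (at x) v * g x)) (at x)"
      if "x \<in> S" for x
      using D[OF Suc.prems(1) that] D[OF Suc.prems(2) that] by (rule has_derivative_mult)
    show "Ck_on k (\<lambda>x. h x * frechet_derivative g (at x) v + frechet_derivative h (at x) v * g x) S" for v
    proof -
      have "Ck_on k h S" "Ck_on k g S"
        using Suc.prems Ck_on_SucD by blast+
      with Suc show ?thesis
        by (intro Ck_on_add[OF assms] Suc.IH) auto
    qed
  qed
qed

lemma Ck_on_inverse:
  assumes "open S"
  shows "Ck_on k h S \<Longrightarrow> (\<And>x. x \<in> S \<Longrightarrow> h x \<noteq> 0) \<Longrightarrow> Ck_on k (\<lambda>x. inverse (h x)) S"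
proof (induction k arbitrary: h)
  case 0
  then show ?case by (simp add: continuous_on_inverse)
next
  case (Suc k)
  have inv: "Ck_on k (\<lambda>x. inverse (h x)) S"
    using Suc Ck_on_SucD by blast
  show ?case
  proof (rule Ck_on_SucI[OF assms])
    show "((\<lambda>x. inverse (h x)) has_derivative
        (\<lambda>v. - (inverse (h x) * frechet_derivative h (at x) v * inverse (h x)))) (at x)"
      if "x \<in> S" for x
      using Suc.prems(2)[OF that] Ck_on_Suc_has_derivative[OF assms Suc.prems(1) that]
      by (rule Deriv.has_derivative_inverse)
    have "Ck_on k (\<lambda>x. (- 1) * (inverse (h x) * frechet_derivative h (at x) v * inverse (h x))) S" for v
      using Suc.prems(1) inv by (intro Ck_on_mult[OF assms] Ck_on_const) auto
    then show "Ck_on k (\<lambda>x. - (inverse (h x) * frechet_derivative h (at x) v * inverse (h x))) S" for v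
      by simp
  qed
qed

lemma Ck_on_sum:
  assumes "open S" "\<And>i. i \<in> A \<Longrightarrow> Ck_on k (h i) S"
  shows "Ck_on k (\<lambda>x. \<Sum>i\<in>A. h i x) S"
  using assms(2)
proof (induction A rule: infinite_finite_induct)
  case (insert a A)
  then show ?case by (simp add: Ck_on_add[OF assms(1)])
qed (simp_all add: Ck_on_const)

lemma Ck_on_prod:
  assumes "open S" "\<And>i. i \<in> A \<Longrightarrow> Ck_on k (h i) S"
  shows "Ck_on k (\<lambda>x. \<Prod>i\<in>A. h i x) S"
  using assms(2)
proof (induction A rule: infinite_finite_induct)
  case (insert a A)
  then show ?case by (simp add: Ck_on_mult[OF assms(1)])
qed (simp_all add: Ck_on_const)

lemma Ck_on_det:
  fixes M :: "real^'n \<Rightarrow> real^'m^'m"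
  assumes "open S" "\<And>i j. Ck_on k (\<lambda>x. M x $ i $ j) S"
  shows "Ck_on k (\<lambda>x. det (M x)) S"
  unfolding det_def by (intro Ck_on_sum Ck_on_mult Ck_on_prod Ck_on_const assms)

lemma matrix_inv_left:
  fixes A :: "'a::semiring_1^'n^'n"
  assumes "invertible A"
  shows "matrix_inv A ** A = mat 1"
  using someI_ex[OF assms[unfolded invertible_def]] by (simp add: matrix_inv_def)

lemma matrix_inv_right:
  fixes A :: "'a::semiring_1^'n^'n"
  assumes "invertible A"
  shows "A ** matrix_inv A = mat 1"
  using someI_ex[OF assms[unfolded invertible_def]] by (simp add: matrix_inv_def)

lemma matrix_vector_mul_matrix_inv:
  fixes A :: "'a::comm_semiring_1^'n^'n"
  assumes "invertible A"
  shows "A *v (matrix_inv A *v b) = b"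
  by (simp add: matrix_vector_mul_assoc matrix_inv_right[OF assms])

lemma invertible_iff_ker:
  fixes A :: "'a::field^'n^'n"
  shows "invertible A \<longleftrightarrow> (\<forall>x. A *v x = 0 \<longrightarrow> x = 0)"
  by (simp add: invertible_left_inverse matrix_left_invertible_ker)

lemma smooth_on_agrad:
  fixes G :: "real^'n \<Rightarrow> real^'n^'n"
  assumes S: "open S"
    and G: "\<And>i j. smooth_on (\<lambda>x. G x $ i $ j) S"
    and G_inv: "\<And>x. x \<in> S \<Longrightarrow> invertible (G x)"
    and f: "smooth_on f S"
  shows "smooth_on (\<lambda>x. agrad G f x $ k) S"
  unfolding smooth_on_def
proof
  fix m
  define N where "N x = (\<chi> i j. if j = k then coord_grad f x $ i else G x $ i $ j)" for x
  have cramer: "agrad G f x $ k = det (N x) * inverse (det (G x))" if "x \<in> S" for x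
  proof -
    have Ga: "G x *v agrad G f x = coord_grad f x"
      unfolding agrad_def by (rule matrix_vector_mul_matrix_inv[OF G_inv[OF that]])
    have "det (N x) = agrad G f x $ k * det (G x)"
      using cramer_lemma[where A = "G x" and k = k and x = "agrad G f x", unfolded Ga]
      by (simp add: N_def)
    then show ?thesis
      using G_inv[OF that] by (simp add: invertible_det_nz)
  qed
  have "Ck_on m (\<lambda>x. coord_grad f x $ i) S" for i
    using Ck_on_partial[OF smooth_on_imp_Ck_on[OF f]] by (simp add: coord_grad_def)
  then have "Ck_on m (\<lambda>x. N x $ i $ j) S" for i j
    using G by (cases "j = k") (simp_all add: N_def smooth_on_imp_Ck_on)
  then have "Ck_on m (\<lambda>x. det (N x) * inverse (det (G x))) S"
    using G G_inv by (intro Ck_on_mult[OF S] Ck_on_inverse[OF S] Ck_on_det[OF S])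
      (auto simp: smooth_on_imp_Ck_on invertible_det_nz)
  then show "Ck_on m (\<lambda>x. agrad G f x $ k) S"
    by (rule Ck_on_cong[OF S, rotated]) (simp add: cramer)
qed

lemma linear_eq_sum_axis:
  fixes L :: "real^'n \<Rightarrow> real"
  assumes "linear L"
  shows "L v = (\<Sum>l\<in>UNIV. L (axis l 1) * v $ l)"
proof -
  have "L v = L (\<Sum>l\<in>UNIV. v $ l *\<^sub>R axis l 1)"
    using basis_expansion[of v] by (simp add: scalar_mult_eq_scaleR)
  then show ?thesis
    by (simp add: linear_sum[OF assms] linear_scale[OF assms] mult.commute)
qed

lemma onorm_le_sum_abs_axis:
  fixes L :: "real^'n \<Rightarrow> real"
  assumes "linear L"
  shows "onorm L \<le> (\<Sum>l\<in>UNIV. \<bar>L (axis l 1)\<bar>)"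
proof (rule onorm_le)
  fix v
  have "norm (L v) \<le> (\<Sum>l\<in>UNIV. \<bar>L (axis l 1) * v $ l\<bar>)"
    unfolding linear_eq_sum_axis[OF assms, of v] real_norm_def by (rule sum_abs)
  also have "\<dots> \<le> (\<Sum>l\<in>UNIV. \<bar>L (axis l 1)\<bar> * norm v)"
    by (intro sum_mono) (simp add: abs_mult component_le_norm_cart mult_left_mono)
  finally show "norm (L v) \<le> (\<Sum>l\<in>UNIV. \<bar>L (axis l 1)\<bar>) * norm v"
    by (simp add: sum_distrib_right)
qed

lemma frechet_derivative_eq_sum_partial:
  fixes h :: "real^'n \<Rightarrow> real"
  assumes "h differentiable at x"
  shows "frechet_derivative h (at x) v = (\<Sum>i\<in>UNIV. partial i h x * v $ i)"
  using linear_eq_sum_axis[OF linear_frechet_derivative[OF assms], of v] by (simp add: partial_def)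

lemma Ck_on_1_lipschitz_on_cball:
  fixes h :: "real^'n \<Rightarrow> real"
  assumes S: "open S" and h: "Ck_on 1 h S" and sub: "cball c r \<subseteq> S"
  shows "\<exists>B. \<forall>y\<in>cball c r. \<forall>z\<in>cball c r. \<bar>h y - h z\<bar> \<le> B * dist y z"
proof -
  have h': "Ck_on (Suc 0) h S"
    using h by simp
  have "continuous_on S (partial l h)" for l
    using Ck_on_imp_continuous_on[OF Ck_on_partial[OF h']] .
  then have "continuous_on (cball c r) (\<lambda>x. \<Sum>l\<in>UNIV. \<bar>partial l h x\<bar>)"
    by (intro continuous_on_sum continuous_on_rabs continuous_on_subset[OF _ sub])
  then have "bounded ((\<lambda>x. \<Sum>l\<in>UNIV. \<bar>partial l h x\<bar>) ` cball c r)"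
    by (rule compact_imp_bounded[OF compact_continuous_image[OF _ compact_cball]])
  then obtain B where B: "\<And>x. x \<in> cball c r \<Longrightarrow> norm (\<Sum>l\<in>UNIV. \<bar>partial l h x\<bar>) \<le> B"
    unfolding bounded_iff by blast
  have "norm (h y - h z) \<le> B * norm (y - z)" if "y \<in> cball c r" "z \<in> cball c r" for y z
  proof (rule differentiable_bound[OF convex_cball _ _ that])
    fix x assume x: "x \<in> cball c r"
    have D: "(h has_derivative frechet_derivative h (at x)) (at x)"
      using Ck_on_Suc_has_derivative[OF S h'] x sub by blast
    then show "(h has_derivative frechet_derivative h (at x)) (at x within cball c r)"
      by (rule has_derivative_at_withinI)
    have "onorm (frechet_derivative h (at x)) \<le> (\<Sum>l\<in>UNIV. \<bar>partial l h x\<bar>)"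
      using onorm_le_sum_abs_axis[OF has_derivative_linear[OF D]] by (simp add: partial_def)
    also have "\<dots> \<le> B"
      using B[OF x] by simp
    finally show "onorm (frechet_derivative h (at x)) \<le> B" .
  qed
  then show ?thesis
    by (intro exI[of _ B] ballI) (simp add: dist_norm)
qed

lemma Ck_on_2_frechet_derivative_lipschitz_on_cball:
  fixes h :: "real^'n \<Rightarrow> real"
  assumes S: "open S" and h: "Ck_on 2 h S" and sub: "cball c r \<subseteq> S"
  shows "\<exists>C. \<forall>y\<in>cball c r. \<forall>z\<in>cball c r.
           onorm (frechet_derivative h (at y) - frechet_derivative h (at z)) \<le> C * dist y z"
proof -
  have h': "Ck_on (Suc (Suc 0)) h S"
    using h by (simp add: numeral_2_eq_2)
  have "\<forall>i. \<exists>B. \<forall>y\<in>cball c r. \<forall>z\<in>cball c r. \<bar>partial i h y - partial i h z\<bar> \<le> B * dist y z"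
    using Ck_on_partial[OF h'] by (intro allI Ck_on_1_lipschitz_on_cball[OF S _ sub]) simp
  from choice[OF this] obtain B where B: "\<And>i y z. y \<in> cball c r \<Longrightarrow> z \<in> cball c r \<Longrightarrow>
      \<bar>partial i h y - partial i h z\<bar> \<le> B i * dist y z"
    by blast
  have "onorm (frechet_derivative h (at y) - frechet_derivative h (at z)) \<le> (\<Sum>i\<in>UNIV. \<bar>B i\<bar>) * dist y z"
    if y: "y \<in> cball c r" and z: "z \<in> cball c r" for y z
  proof -
    have D: "(h has_derivative frechet_derivative h (at x)) (at x)" if "x \<in> cball c r" for x
      using Ck_on_Suc_has_derivative[OF S h'] that sub by blast
    have "linear (\<lambda>v. frechet_derivative h (at y) v - frechet_derivative h (at z) v)"
      using D[OF y] D[OF z] by (intro linear_compose_sub has_derivative_linear)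
    then have "onorm (frechet_derivative h (at y) - frechet_derivative h (at z))
        \<le> (\<Sum>i\<in>UNIV. \<bar>partial i h y - partial i h z\<bar>)"
      using onorm_le_sum_abs_axis by (simp add: fun_diff_def partial_def)
    also have "\<dots> \<le> (\<Sum>i\<in>UNIV. \<bar>B i\<bar> * dist y z)"
      by (intro sum_mono order_trans[OF B[OF y z]] mult_right_mono) auto
    finally show ?thesis
      by (simp add: sum_distrib_right)
  qed
  then show ?thesis
    by blast
qed

lemma Ck_on_2_linearization_on_cball:
  fixes h :: "real^'n \<Rightarrow> real"
  assumes S: "open S" and h: "Ck_on 2 h S" and sub: "cball x0 r \<subseteq> S"
  shows "\<exists>C. \<forall>x\<in>cball x0 r.
           \<bar>h x0 - h x - (\<Sum>i\<in>UNIV. partial i h x * (x0 - x) $ i)\<bar> \<le> C * (norm (x - x0))\<^sup>2"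
proof -
  obtain C where C: "\<And>y z. y \<in> cball x0 r \<Longrightarrow> z \<in> cball x0 r \<Longrightarrow>
      onorm (frechet_derivative h (at y) - frechet_derivative h (at z)) \<le> C * dist y z"
    using Ck_on_2_frechet_derivative_lipschitz_on_cball[OF S h sub] by blast
  have D: "(h has_derivative frechet_derivative h (at x)) (at x)" if "x \<in> cball x0 r" for x
    using Ck_on_Suc_has_derivative[OF S h[folded Suc_1]] that sub by blast
  have "\<bar>h x0 - h x - (\<Sum>i\<in>UNIV. partial i h x * (x0 - x) $ i)\<bar> \<le> \<bar>C\<bar> * (norm (x - x0))\<^sup>2"
    if x: "x \<in> cball x0 r" for x
  proof -
    have seg: "closed_segment x x0 \<subseteq> cball x0 r"
      using x order_trans[OF zero_le_dist, of x0 x r] by (intro closed_segment_subset) auto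
    have "norm (h x0 - h x - frechet_derivative h (at x) (x0 - x)) \<le> norm (x0 - x) * (\<bar>C\<bar> * norm (x - x0))"
    proof (rule differentiable_bound_linearization[where S = "closed_segment x x0"])
      show "x + t *\<^sub>R (x0 - x) \<in> closed_segment x x0" if "t \<in> {0..1}" for t
        using that by (auto simp: closed_segment_def algebra_simps intro!: exI[of _ t])
      fix w assume w: "w \<in> closed_segment x x0"
      have wx: "w \<in> cball x0 r" "dist w x \<le> norm (x - x0)"
        using seg w dist_in_closed_segment[OF w] by (auto simp: dist_norm)
      show "(h has_derivative frechet_derivative h (at w)) (at w within closed_segment x x0)"
        using D[OF wx(1)] by (rule has_derivative_at_withinI)
      show "onorm (frechet_derivative h (at w) - frechet_derivative h (at x)) \<le> \<bar>C\<bar> * norm (x - x0)"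
        using C[OF wx(1) x] mult_mono[OF abs_ge_self wx(2), of C] by simp
    qed (simp add: x)
    moreover have "frechet_derivative h (at x) (x0 - x) = (\<Sum>i\<in>UNIV. partial i h x * (x0 - x) $ i)"
      using D[OF x] by (intro frechet_derivative_eq_sum_partial) (auto simp: differentiable_def)
    ultimately show ?thesis
      by (simp add: norm_minus_commute power2_eq_square mult_ac)
  qed
  then show ?thesis
    by blast
qed

lemma Ck_on_2_linearization:
  fixes h :: "real^'n \<Rightarrow> real"
  assumes S: "open S" and h: "Ck_on 2 h S" and x0: "x0 \<in> S"
  shows "\<exists>C. \<forall>\<^sub>F x in nhds x0.
           \<bar>h x0 - h x - (\<Sum>i\<in>UNIV. partial i h x * (x0 - x) $ i)\<bar> \<le> C * (norm (x - x0))\<^sup>2"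
proof -
  obtain r where "r > 0" "cball x0 r \<subseteq> S"
    using open_contains_cball S x0 by blast
  moreover from Ck_on_2_linearization_on_cball[OF S h this(2)] obtain C where
    "\<forall>x\<in>cball x0 r. \<bar>h x0 - h x - (\<Sum>i\<in>UNIV. partial i h x * (x0 - x) $ i)\<bar> \<le> C * (norm (x - x0))\<^sup>2"
    by blast
  ultimately have "\<forall>\<^sub>F x in nhds x0.
      \<bar>h x0 - h x - (\<Sum>i\<in>UNIV. partial i h x * (x0 - x) $ i)\<bar> \<le> C * (norm (x - x0))\<^sup>2"
    unfolding eventually_nhds_metric_le by (auto simp: dist_commute)
  then show ?thesis ..
qed

definition coord_jacobian :: "(real^'n \<Rightarrow> real^'m) \<Rightarrow> real^'n \<Rightarrow> real^'n^'m" where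
  "coord_jacobian F x = (\<chi> j i. partial i (\<lambda>y. F y $ j) x)"

lemma eventually_norm_le_if_components:
  fixes u :: "'a \<Rightarrow> real^'n"
  assumes "\<And>j. \<exists>C. \<forall>\<^sub>F x in F. \<bar>u x $ j\<bar> \<le> C * w x"
  shows "\<exists>C. \<forall>\<^sub>F x in F. norm (u x) \<le> C * w x"
proof -
  from assms have "\<forall>j. \<exists>C. \<forall>\<^sub>F x in F. \<bar>u x $ j\<bar> \<le> C * w x" ..
  from choice[OF this] obtain C where "\<And>j. \<forall>\<^sub>F x in F. \<bar>u x $ j\<bar> \<le> C j * w x"
    by blast
  then have "\<forall>\<^sub>F x in F. \<forall>j. \<bar>u x $ j\<bar> \<le> C j * w x"
    by (rule eventually_all_finite)
  then have "\<forall>\<^sub>F x in F. norm (u x) \<le> (\<Sum>j\<in>UNIV. C j) * w x"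
  proof eventually_elim
    case (elim x)
    have "norm (u x) \<le> (\<Sum>j\<in>UNIV. \<bar>u x $ j\<bar>)"
      by (rule norm_le_l1_cart)
    also have "\<dots> \<le> (\<Sum>j\<in>UNIV. C j * w x)"
      using elim by (intro sum_mono) blast
    finally show ?case
      by (simp add: sum_distrib_right)
  qed
  then show ?thesis ..
qed

lemma coord_jacobian_linearization:
  fixes F :: "real^'n \<Rightarrow> real^'m"
  assumes "open S" "\<And>j. Ck_on 2 (\<lambda>x. F x $ j) S" "x0 \<in> S"
  shows "\<exists>C. \<forall>\<^sub>F x in nhds x0. norm (F x0 - F x - coord_jacobian F x *v (x0 - x)) \<le> C * (norm (x - x0))\<^sup>2"
  using Ck_on_2_linearization[OF assms(1,2,3)]
  by (intro eventually_norm_le_if_components) (simp add: coord_jacobian_def matrix_vector_mult_def)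

lemma Ck_on_1_lipschitz_at:
  fixes F :: "real^'n \<Rightarrow> real^'m"
  assumes S: "open S" and F: "\<And>j. Ck_on 1 (\<lambda>x. F x $ j) S" and x0: "x0 \<in> S"
  shows "\<exists>C. \<forall>\<^sub>F x in nhds x0. norm (F x - F x0) \<le> C * norm (x - x0)"
proof (rule eventually_norm_le_if_components)
  fix j
  obtain r where r: "r > 0" "cball x0 r \<subseteq> S"
    using open_contains_cball S x0 by blast
  obtain C where C: "\<forall>y\<in>cball x0 r. \<forall>z\<in>cball x0 r. \<bar>F y $ j - F z $ j\<bar> \<le> C * dist y z"
    using Ck_on_1_lipschitz_on_cball[OF S F r(2)] by blast
  have "\<forall>\<^sub>F x in nhds x0. \<bar>(F x - F x0) $ j\<bar> \<le> C * norm (x - x0)"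
    unfolding eventually_nhds_metric_le using r(1) C by (auto simp: dist_norm norm_minus_commute)
  then show "\<exists>C. \<forall>\<^sub>F x in nhds x0. \<bar>(F x - F x0) $ j\<bar> \<le> C * norm (x - x0)" ..
qed

lemma eventually_less_if_isCont:
  fixes g :: "'a::t2_space \<Rightarrow> real"
  assumes "isCont g x0" "g x0 < K"
  shows "\<forall>\<^sub>F x in nhds x0. g x < K"
  using order_tendstoD(2)[OF assms(1)[unfolded isCont_def tendsto_at_iff_tendsto_nhds] assms(2)] .

lemma invertible_if_norm_le:
  fixes M :: "real^'n^'n"
  assumes "\<And>v. norm v \<le> B * norm (M *v v)"
  shows "invertible M"
  unfolding invertible_iff_ker using assms by (metis mult_zero_right norm_le_zero_iff norm_zero)

lemma invertible_imp_norm_le: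
  fixes M :: "real^'n^'n"
  assumes "invertible M"
  shows "\<exists>B>0. \<forall>v. norm v \<le> B * norm (M *v v)"
proof (intro exI conjI allI)
  let ?B = "onorm ((*v) (matrix_inv M)) + 1"
  show "?B > 0"
    using onorm_pos_le[OF matrix_vector_mul_bounded_linear, of "matrix_inv M"] by simp
  fix v
  have "v = matrix_inv M *v (M *v v)"
    by (simp add: matrix_vector_mul_assoc matrix_inv_left[OF assms])
  then have "norm v \<le> onorm ((*v) (matrix_inv M)) * norm (M *v v)"
    by (metis onorm[OF matrix_vector_mul_bounded_linear])
  also have "\<dots> \<le> ?B * norm (M *v v)"
    by (simp add: mult_right_mono)
  finally show "norm v \<le> ?B * norm (M *v v)" .
qed

lemma norm_le_matrix_vector_mult_perturb:
  fixes M M0 :: "real^'n^'n"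
  assumes lower: "\<And>v. norm v \<le> B * norm (M0 *v v)" and B: "B > 0"
    and close: "(\<Sum>i\<in>UNIV. \<Sum>j\<in>UNIV. \<bar>M $ i $ j - M0 $ i $ j\<bar>) \<le> 1 / (2 * B)"
  shows "norm v \<le> 2 * B * norm (M *v v)"
proof -
  have small: "onorm ((*v) (M - M0)) \<le> 1 / (2 * B)"
    using onorm_le_matrix_component_sum[of "M - M0"] close by simp
  have "norm ((M - M0) *v v) \<le> onorm ((*v) (M - M0)) * norm v"
    by (rule onorm[OF matrix_vector_mul_bounded_linear])
  also have "\<dots> \<le> 1 / (2 * B) * norm v"
    using small by (rule mult_right_mono) simp
  finally have "norm (M0 *v v) \<le> norm (M *v v) + norm v / (2 * B)"
    using norm_triangle_ineq4[of "M *v v" "(M - M0) *v v"]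
    by (simp add: matrix_vector_mult_diff_rdistrib)
  then show ?thesis
    using lower[of v] B by (simp add: field_simps)
qed

lemma eventually_norm_le_matrix_vector_mult:
  fixes M :: "'a::t2_space \<Rightarrow> real^'n^'n"
  assumes cont: "\<And>i j. isCont (\<lambda>x. M x $ i $ j) x0" and inv: "invertible (M x0)"
  shows "\<exists>B>0. \<forall>\<^sub>F x in nhds x0. \<forall>v. norm v \<le> B * norm (M x *v v)"
proof -
  obtain B where B: "B > 0" "\<And>v. norm v \<le> B * norm (M x0 *v v)"
    using invertible_imp_norm_le[OF inv] by blast
  define \<phi> where "\<phi> x = (\<Sum>i\<in>UNIV. \<Sum>j\<in>UNIV. \<bar>M x $ i $ j - M x0 $ i $ j\<bar>)" for x
  have "isCont \<phi> x0"
    unfolding \<phi>_def by (intro continuous_sum continuous_rabs continuous_diff continuous_const cont)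
  moreover have "\<phi> x0 < 1 / (2 * B)"
    using B by (simp add: \<phi>_def)
  ultimately have "\<forall>\<^sub>F x in nhds x0. \<phi> x < 1 / (2 * B)"
    by (rule eventually_less_if_isCont)
  then have "\<forall>\<^sub>F x in nhds x0. \<forall>v. norm v \<le> 2 * B * norm (M x *v v)"
    by eventually_elim (use B in \<open>auto intro!: norm_le_matrix_vector_mult_perturb simp: \<phi>_def\<close>)
  moreover have "2 * B > 0"
    using B by simp
  ultimately show ?thesis
    by blast
qed

lemma norm_bilinear_vec_le:
  fixes u :: "real^'n" and w :: "real^'k"
  shows "norm (\<chi> i::'m::finite. \<Sum>j\<in>UNIV. \<Sum>k\<in>UNIV. c i j k * u $ j * w $ k)
           \<le> (\<Sum>i\<in>UNIV. \<Sum>j\<in>UNIV. \<Sum>k\<in>UNIV. \<bar>c i j k\<bar>) * norm u * norm w"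
proof -
  have "\<bar>c i j k * u $ j * w $ k\<bar> \<le> \<bar>c i j k\<bar> * (norm u * norm w)" for i j k
    unfolding abs_mult mult.assoc
    by (intro mult_left_mono mult_mono component_le_norm_cart) auto
  then have "\<bar>\<Sum>j\<in>UNIV. \<Sum>k\<in>UNIV. c i j k * u $ j * w $ k\<bar>
      \<le> (\<Sum>j\<in>UNIV. \<Sum>k\<in>UNIV. \<bar>c i j k\<bar> * (norm u * norm w))" for i
    by (intro order_trans[OF sum_abs] sum_mono order_trans[OF sum_abs]) auto
  then have "norm (\<chi> i::'m::finite. \<Sum>j\<in>UNIV. \<Sum>k\<in>UNIV. c i j k * u $ j * w $ k)
      \<le> (\<Sum>i\<in>UNIV. \<Sum>j\<in>UNIV. \<Sum>k\<in>UNIV. \<bar>c i j k\<bar> * (norm u * norm w))"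
    by (intro order_trans[OF norm_le_l1_cart] sum_mono) simp
  then show ?thesis
    by (simp add: sum_distrib_right mult.assoc)
qed

lemma newton_error_bound:
  fixes M :: "real^'n^'n" and a e \<beta> q :: "real^'n"
  assumes lower: "\<And>v. norm v \<le> B * norm (M *v v)"
    and solve: "M *v \<beta> = - a"
    and residual: "norm (M *v e - a) \<le> K * (norm e)\<^sup>2"
    and a: "norm a \<le> Ka * norm e"
    and q: "norm q \<le> Kq * (norm \<beta>)\<^sup>2"
    and B: "B \<ge> 0" and Kq: "Kq \<ge> 0"
  shows "norm (e + \<beta> - q) \<le> (B * K + Kq * (B * Ka)\<^sup>2) * (norm e)\<^sup>2"
proof -
  have "M *v (e + \<beta>) = M *v e - a"
    using solve by (simp add: matrix_vector_right_distrib)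
  then have e\<beta>: "norm (e + \<beta>) \<le> B * (K * (norm e)\<^sup>2)"
    using lower[of "e + \<beta>"] residual B by (metis mult_left_mono order_trans)
  have "norm \<beta> \<le> B * norm a"
    using lower[of \<beta>] solve by simp
  also have "\<dots> \<le> B * Ka * norm e"
    using a B by (simp add: mult_left_mono mult.assoc)
  finally have "norm q \<le> Kq * (B * Ka * norm e)\<^sup>2"
    using q Kq by (meson mult_left_mono norm_ge_zero order_trans power_mono)
  with e\<beta> have "norm (e + \<beta> - q) \<le> B * (K * (norm e)\<^sup>2) + Kq * (B * Ka * norm e)\<^sup>2"
    by (meson add_mono norm_triangle_ineq4 order_trans)
  also have "\<dots> = (B * K + Kq * (B * Ka)\<^sup>2) * (norm e)\<^sup>2"
    by (simp add: algebra_simps power_mult_distrib)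
  finally show ?thesis .
qed

lemma iterates_tendsto_if_halving:
  fixes N :: "'a::real_normed_vector \<Rightarrow> 'a"
  assumes halve: "\<And>x. x \<in> ball xs r \<Longrightarrow> norm (N x - xs) \<le> norm (x - xs) / 2"
    and x0: "x0 \<in> ball xs r"
  shows "(N ^^ k) x0 \<in> ball xs r" and "(\<lambda>k. (N ^^ k) x0) \<longlonglongrightarrow> xs"
proof -
  have iter: "(N ^^ k) x0 \<in> ball xs r \<and> norm ((N ^^ k) x0 - xs) \<le> (1/2) ^ k * norm (x0 - xs)" for k
  proof (induction k)
    case 0
    then show ?case using x0 by simp
  next
    case (Suc k)
    then have halved: "norm (N ((N ^^ k) x0) - xs) \<le> norm ((N ^^ k) x0 - xs) / 2"
      using halve by blast
    moreover have "norm ((N ^^ k) x0 - xs) < r"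
      using Suc by (simp add: dist_norm norm_minus_commute)
    ultimately have "norm (N ((N ^^ k) x0) - xs) < r"
      using norm_ge_zero[of "N ((N ^^ k) x0) - xs"] by linarith
    moreover have "norm (N ((N ^^ k) x0) - xs) \<le> (1/2) ^ Suc k * norm (x0 - xs)"
      using halved Suc by simp
    ultimately show ?case
      by (simp add: dist_norm norm_minus_commute)
  qed
  then show "(N ^^ k) x0 \<in> ball xs r"
    by blast
  have "((\<lambda>k. (N ^^ k) x0 - xs) \<longlongrightarrow> 0) sequentially"
    by (rule Lim_null_comparison[where g = "\<lambda>k. (1/2) ^ k * norm (x0 - xs)"])
      (use iter in \<open>auto intro!: tendsto_mult_left_zero LIMSEQ_power_zero\<close>)
  then show "(\<lambda>k. (N ^^ k) x0) \<longlonglongrightarrow> xs"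
    by (simp add: LIM_zero_iff)
qed

lemma quadratic_convergence_near_fixed_point:
  fixes N :: "'a::real_normed_vector \<Rightarrow> 'a"
  assumes "\<forall>\<^sub>F x in nhds xs. P x \<and> norm (N x - xs) \<le> C * (norm (x - xs))\<^sup>2"
  shows "\<exists>U. open U \<and> xs \<in> U \<and> (\<forall>x\<in>U. P x) \<and>
           (\<forall>x0\<in>U. (\<forall>k. (N ^^ k) x0 \<in> U) \<and> (\<lambda>k. (N ^^ k) x0) \<longlonglongrightarrow> xs \<and>
              (\<forall>k. norm ((N ^^ Suc k) x0 - xs) \<le> C * (norm ((N ^^ k) x0 - xs))\<^sup>2))"
proof -
  obtain d where d: "d > 0" "\<And>x. dist x xs < d \<Longrightarrow> P x \<and> norm (N x - xs) \<le> C * (norm (x - xs))\<^sup>2"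
    using assms unfolding eventually_nhds_metric by blast
  define r where "r = min d (1 / (2 * (\<bar>C\<bar> + 1)))"
  have step: "P x \<and> norm (N x - xs) \<le> C * (norm (x - xs))\<^sup>2 \<and> norm (N x - xs) \<le> norm (x - xs) / 2"
    if x: "x \<in> ball xs r" for x
  proof -
    have "dist x xs < d" and small: "norm (x - xs) * (\<bar>C\<bar> + 1) \<le> 1 / 2"
      using x by (auto simp: r_def dist_norm norm_minus_commute field_simps)
    have "C * (norm (x - xs))\<^sup>2 \<le> (norm (x - xs) * (\<bar>C\<bar> + 1)) * norm (x - xs)"
      by (simp add: power2_eq_square mult_right_mono mult.commute mult.left_commute)
    also have "\<dots> \<le> norm (x - xs) / 2"
      using mult_right_mono[OF small norm_ge_zero] by simp
    finally show ?thesis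
      using d(2)[OF \<open>dist x xs < d\<close>] by linarith
  qed
  have "open (ball xs r)" "xs \<in> ball xs r"
    using d(1) by (auto simp: r_def)
  moreover have "(\<forall>k. (N ^^ k) x0 \<in> ball xs r) \<and> (\<lambda>k. (N ^^ k) x0) \<longlonglongrightarrow> xs \<and>
      (\<forall>k. norm ((N ^^ Suc k) x0 - xs) \<le> C * (norm ((N ^^ k) x0 - xs))\<^sup>2)" if "x0 \<in> ball xs r" for x0
    using iterates_tendsto_if_halving[OF _ that] step by auto
  ultimately show ?thesis
    using step by blast
qed

lemma transpose_Hstar:
  "transpose (Hstar G Gs f x) = coord_jacobian (agrad G f) x + (\<chi> j i. \<Sum>k\<in>UNIV. agrad G f x $ k * Gs x i k j)"
  by (simp add: vec_eq_iff Hstar_def coord_jacobian_def transpose_def)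

lemma agrad_locally_linear:
  assumes "open \<Omega>" "\<xi>s \<in> \<Omega>" "\<And>j. Ck_on 2 (\<lambda>x. agrad G f x $ j) \<Omega>" "agrad G f \<xi>s = 0"
  shows "\<exists>K. \<forall>\<^sub>F x in nhds \<xi>s. norm (agrad G f x) \<le> K * norm (x - \<xi>s)"
  using Ck_on_1_lipschitz_at[OF assms(1) Ck_on_SucD[of 1, unfolded Suc_1, OF assms(3)] assms(2)] assms(4)
  by simp

lemma isCont_transpose_Hstar:
  assumes \<Omega>: "open \<Omega>" "\<xi>s \<in> \<Omega>"
    and a: "\<And>j. Ck_on 2 (\<lambda>x. agrad G f x $ j) \<Omega>"
    and Gs: "\<And>i j k. isCont (\<lambda>x. Gs x i j k) \<xi>s"
  shows "isCont (\<lambda>x. transpose (Hstar G Gs f x) $ j $ i) \<xi>s"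
proof -
  have "isCont (partial i (\<lambda>y. agrad G f y $ j)) \<xi>s"
    using Ck_on_imp_isCont[OF \<Omega> Ck_on_partial[of 1, unfolded Suc_1, OF a]] .
  moreover have "isCont (\<lambda>x. agrad G f x $ k) \<xi>s" for k
    using Ck_on_imp_isCont[OF \<Omega> a] .
  ultimately show ?thesis
    using Gs by (simp add: transpose_Hstar coord_jacobian_def)
qed

lemma Hstar_residual_le:
  fixes \<xi>s :: "real^'n"
  assumes crit: "agrad G f \<xi>s = 0"
    and linearization: "norm (agrad G f \<xi>s - agrad G f x - coord_jacobian (agrad G f) x *v (\<xi>s - x))
      \<le> Kj * (norm (x - \<xi>s))\<^sup>2"
    and a: "norm (agrad G f x) \<le> Ka * norm (x - \<xi>s)"
    and Gs: "(\<Sum>j\<in>UNIV. \<Sum>i\<in>UNIV. \<Sum>k\<in>UNIV. \<bar>Gs x i k j\<bar>) \<le> KS"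
  shows "norm (transpose (Hstar G Gs f x) *v (x - \<xi>s) - agrad G f x) \<le> (Kj + KS * \<bar>Ka\<bar>) * (norm (x - \<xi>s))\<^sup>2"
proof -
  let ?a = "agrad G f" and ?e = "x - \<xi>s"
  let ?Q = "\<chi> j. \<Sum>i\<in>UNIV. \<Sum>k\<in>UNIV. Gs x i k j * ?e $ i * ?a x $ k"
  have "transpose (Hstar G Gs f x) *v ?e - ?a x
      = (coord_jacobian ?a x *v ?e - ?a x) + (\<chi> j i. \<Sum>k\<in>UNIV. ?a x $ k * Gs x i k j) *v ?e"
    by (simp add: transpose_Hstar matrix_vector_mult_add_rdistrib)
  also have "coord_jacobian ?a x *v ?e - ?a x = ?a \<xi>s - ?a x - coord_jacobian ?a x *v (\<xi>s - x)"
    using crit by (simp add: matrix_vector_mult_diff_distrib)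
  also have "(\<chi> j i. \<Sum>k\<in>UNIV. ?a x $ k * Gs x i k j) *v ?e = ?Q"
    by (simp add: matrix_vector_mult_def sum_distrib_left mult_ac)
  finally have "norm (transpose (Hstar G Gs f x) *v ?e - ?a x)
      \<le> norm (?a \<xi>s - ?a x - coord_jacobian ?a x *v (\<xi>s - x)) + norm ?Q"
    by (simp only: norm_triangle_ineq)
  also have "\<dots> \<le> Kj * (norm ?e)\<^sup>2 + KS * norm ?e * (\<bar>Ka\<bar> * norm ?e)"
  proof (rule add_mono[OF linearization])
    have "0 \<le> KS"
      using Gs by (meson order_trans sum_nonneg abs_ge_zero)
    moreover have "norm (?a x) \<le> \<bar>Ka\<bar> * norm ?e"
      using order_trans[OF a mult_right_mono[OF abs_ge_self norm_ge_zero]] .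
    ultimately show "norm ?Q \<le> KS * norm ?e * (\<bar>Ka\<bar> * norm ?e)"
      using norm_bilinear_vec_le[of "\<lambda>j i k. Gs x i k j" ?e "?a x"] Gs
      by (smt (verit) mult_mono mult_nonneg_nonneg mult_right_mono norm_ge_zero)
  qed
  finally show ?thesis
    by (simp add: power2_eq_square algebra_simps)
qed

lemma Hstar_residual_locally_quadratic:
  fixes \<xi>s :: "real^'n"
  assumes \<Omega>: "open \<Omega>" "\<xi>s \<in> \<Omega>"
    and a: "\<And>j. Ck_on 2 (\<lambda>x. agrad G f x $ j) \<Omega>"
    and Gs: "\<And>i j k. isCont (\<lambda>x. Gs x i j k) \<xi>s"
    and crit: "agrad G f \<xi>s = 0"
  shows "\<exists>K. \<forall>\<^sub>F x in nhds \<xi>s.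
           norm (transpose (Hstar G Gs f x) *v (x - \<xi>s) - agrad G f x) \<le> K * (norm (x - \<xi>s))\<^sup>2"
proof -
  obtain Ka where Ka: "\<forall>\<^sub>F x in nhds \<xi>s. norm (agrad G f x) \<le> Ka * norm (x - \<xi>s)"
    using agrad_locally_linear[OF \<Omega> a crit] by blast
  obtain Kj where Kj: "\<forall>\<^sub>F x in nhds \<xi>s. norm (agrad G f \<xi>s - agrad G f x
      - coord_jacobian (agrad G f) x *v (\<xi>s - x)) \<le> Kj * (norm (x - \<xi>s))\<^sup>2"
    using coord_jacobian_linearization[OF \<Omega>(1) a \<Omega>(2)] by blast
  let ?S = "\<lambda>x. \<Sum>j\<in>UNIV. \<Sum>i\<in>UNIV. \<Sum>k\<in>UNIV. \<bar>Gs x i k j\<bar>"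
  have "\<forall>\<^sub>F x in nhds \<xi>s. ?S x < ?S \<xi>s + 1"
    using Gs by (intro eventually_less_if_isCont continuous_sum continuous_rabs) auto
  with Ka Kj have "\<forall>\<^sub>F x in nhds \<xi>s. norm (transpose (Hstar G Gs f x) *v (x - \<xi>s) - agrad G f x)
      \<le> (Kj + (?S \<xi>s + 1) * \<bar>Ka\<bar>) * (norm (x - \<xi>s))\<^sup>2"
    by eventually_elim (intro Hstar_residual_le[OF crit]; simp)
  then show ?thesis ..
qed

lemma newton_step_error_le:
  fixes \<xi>s :: "real^'n"
  assumes lower: "\<And>v. norm v \<le> B * norm (transpose (Hstar G Gs f x) *v v)" and B: "B \<ge> 0"
    and residual: "norm (transpose (Hstar G Gs f x) *v (x - \<xi>s) - agrad G f x) \<le> K * (norm (x - \<xi>s))\<^sup>2"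
    and a: "norm (agrad G f x) \<le> Ka * norm (x - \<xi>s)"
    and Gam: "(\<Sum>i\<in>UNIV. \<Sum>j\<in>UNIV. \<Sum>k\<in>UNIV. \<bar>Gam x j k i\<bar>) \<le> KG"
  shows "invertible (transpose (Hstar G Gs f x))"
    and "norm (newton_step G Gam Gs f x - \<xi>s) \<le> (B * K + KG / 2 * (B * Ka)\<^sup>2) * (norm (x - \<xi>s))\<^sup>2"
proof -
  define \<beta> where "\<beta> = newton_beta G Gs f x"
  define q where "q = (1/2) *\<^sub>R (\<chi> i. \<Sum>j\<in>UNIV. \<Sum>k\<in>UNIV. Gam x j k i * \<beta> $ j * \<beta> $ k)"
  show inv: "invertible (transpose (Hstar G Gs f x))"
    using lower by (rule invertible_if_norm_le)
  then have solve: "transpose (Hstar G Gs f x) *v \<beta> = - agrad G f x"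
    unfolding \<beta>_def newton_beta_def by (rule matrix_vector_mul_matrix_inv)
  have KG: "0 \<le> KG"
    using Gam by (meson order_trans sum_nonneg abs_ge_zero)
  have "norm q \<le> KG / 2 * (norm \<beta>)\<^sup>2"
    using norm_bilinear_vec_le[of "\<lambda>i j k. Gam x j k i" \<beta> \<beta>]
      mult_right_mono[OF Gam, of "norm \<beta> * norm \<beta>"]
    by (simp add: q_def power2_eq_square mult.assoc)
  then have "norm ((x - \<xi>s) + \<beta> - q) \<le> (B * K + KG / 2 * (B * Ka)\<^sup>2) * (norm (x - \<xi>s))\<^sup>2"
    using B KG by (intro newton_error_bound[OF lower solve residual a]) auto
  moreover have "newton_step G Gam Gs f x - \<xi>s = (x - \<xi>s) + \<beta> - q"
    by (simp add: newton_step_def Let_def \<beta>_def q_def vec_eq_iff)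
  ultimately show "norm (newton_step G Gam Gs f x - \<xi>s) \<le> (B * K + KG / 2 * (B * Ka)\<^sup>2) * (norm (x - \<xi>s))\<^sup>2"
    by metis
qed

lemma newton_step_locally_quadratic:
  fixes \<xi>s :: "real^'n"
  assumes \<Omega>: "open \<Omega>" "\<xi>s \<in> \<Omega>"
    and a: "\<And>j. Ck_on 2 (\<lambda>x. agrad G f x $ j) \<Omega>"
    and Gam: "\<And>i j k. isCont (\<lambda>x. Gam x i j k) \<xi>s"
    and Gs: "\<And>i j k. isCont (\<lambda>x. Gs x i j k) \<xi>s"
    and crit: "agrad G f \<xi>s = 0"
    and inv: "invertible (transpose (Hstar G Gs f \<xi>s))"
  shows "\<exists>C. \<forall>\<^sub>F x in nhds \<xi>s. x \<in> \<Omega> \<and> invertible (transpose (Hstar G Gs f x)) \<and>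
           norm (newton_step G Gam Gs f x - \<xi>s) \<le> C * (norm (x - \<xi>s))\<^sup>2"
proof -
  obtain B where B: "B > 0" "\<forall>\<^sub>F x in nhds \<xi>s. \<forall>v. norm v \<le> B * norm (transpose (Hstar G Gs f x) *v v)"
    using eventually_norm_le_matrix_vector_mult[OF isCont_transpose_Hstar[OF \<Omega> a Gs] inv] by blast
  obtain Ka where Ka: "\<forall>\<^sub>F x in nhds \<xi>s. norm (agrad G f x) \<le> Ka * norm (x - \<xi>s)"
    using agrad_locally_linear[OF \<Omega> a crit] by blast
  obtain K where K: "\<forall>\<^sub>F x in nhds \<xi>s.
      norm (transpose (Hstar G Gs f x) *v (x - \<xi>s) - agrad G f x) \<le> K * (norm (x - \<xi>s))\<^sup>2"
    using Hstar_residual_locally_quadratic[where Gs = Gs, OF \<Omega> a Gs crit] by blast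
  let ?T = "\<lambda>x. \<Sum>i\<in>UNIV. \<Sum>j\<in>UNIV. \<Sum>k\<in>UNIV. \<bar>Gam x j k i\<bar>"
  have "\<forall>\<^sub>F x in nhds \<xi>s. ?T x < ?T \<xi>s + 1"
    using Gam by (intro eventually_less_if_isCont continuous_sum continuous_rabs) auto
  moreover have "\<forall>\<^sub>F x in nhds \<xi>s. x \<in> \<Omega>"
    by (rule eventually_nhds_in_open[OF \<Omega>])
  ultimately have "\<forall>\<^sub>F x in nhds \<xi>s. x \<in> \<Omega> \<and> invertible (transpose (Hstar G Gs f x)) \<and>
      norm (newton_step G Gam Gs f x - \<xi>s) \<le> (B * K + (?T \<xi>s + 1) / 2 * (B * Ka)\<^sup>2) * (norm (x - \<xi>s))\<^sup>2"
    using B(2) Ka K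
  proof eventually_elim
    case (elim x)
    then show ?case
      using newton_step_error_le[of B G Gs f x \<xi>s K Ka Gam "?T \<xi>s + 1"] B(1) by auto
  qed
  then show ?thesis ..
qed

theorem theorem3:
  fixes \<Omega> :: "(real^'n) set"
    and G :: "real^'n \<Rightarrow> real^'n^'n"
    and Gam Gs :: "real^'n \<Rightarrow> 'n \<Rightarrow> 'n \<Rightarrow> 'n \<Rightarrow> real"
    and f :: "real^'n \<Rightarrow> real"
    and \<xi>s :: "real^'n"
  assumes chart: "open \<Omega>"
    and G_smooth: "\<And>i j. smooth_on (\<lambda>x. G x $ i $ j) \<Omega>"
    and G_sym: "\<And>x i j. x \<in> \<Omega> \<Longrightarrow> G x $ i $ j = G x $ j $ i"
    and G_pos: "\<And>x v. x \<in> \<Omega> \<Longrightarrow> v \<noteq> 0 \<Longrightarrow> v \<bullet> (G x *v v) > 0"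
    and Gam_smooth: "\<And>i j k. smooth_on (\<lambda>x. Gam x i j k) \<Omega>"
    and Gs_smooth: "\<And>i j k. smooth_on (\<lambda>x. Gs x i j k) \<Omega>"
    and Gam_torsion_free: "\<And>x i j k. x \<in> \<Omega> \<Longrightarrow> Gam x i j k = Gam x j i k"
    and Gs_torsion_free: "\<And>x i j k. x \<in> \<Omega> \<Longrightarrow> Gs x i j k = Gs x j i k"
    and dual: "\<And>x i j k. x \<in> \<Omega> \<Longrightarrow>
        partial i (\<lambda>y. G y $ j $ k) x
          = (\<Sum>l\<in>UNIV. Gam x i j l * G x $ l $ k) + (\<Sum>l\<in>UNIV. Gs x i k l * G x $ j $ l)"
    and f_smooth: "smooth_on f \<Omega>"
    and xs_in: "\<xi>s \<in> \<Omega>"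
    and crit: "agrad G f \<xi>s = 0"
    and Hess_pos: "\<And>X. X \<noteq> 0 \<Longrightarrow>
        (transpose (Hstar G Gs f \<xi>s) *v X) \<bullet> (G \<xi>s *v X) > 0"
  shows "\<exists>U. open U \<and> \<xi>s \<in> U \<and> U \<subseteq> \<Omega> \<and>
           (\<forall>\<xi>0\<in>U.
              (\<forall>k. (newton_step G Gam Gs f ^^ k) \<xi>0 \<in> \<Omega> \<and>
                   invertible (transpose (Hstar G Gs f ((newton_step G Gam Gs f ^^ k) \<xi>0)))) \<and>
              (\<lambda>k. (newton_step G Gam Gs f ^^ k) \<xi>0) \<longlonglongrightarrow> \<xi>s \<and>
              (\<exists>C. \<forall>k. norm ((newton_step G Gam Gs f ^^ Suc k) \<xi>0 - \<xi>s)
                        \<le> C * (norm ((newton_step G Gam Gs f ^^ k) \<xi>0 - \<xi>s))\<^sup>2))"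
proof -
  have G_inv: "invertible (G x)" if "x \<in> \<Omega>" for x
    unfolding invertible_iff_ker using G_pos[OF that] by (metis inner_zero_right less_irrefl)
  have a: "Ck_on 2 (\<lambda>x. agrad G f x $ j) \<Omega>" for j
    using smooth_on_agrad[OF chart G_smooth G_inv f_smooth] by (rule smooth_on_imp_Ck_on)
  have Gam: "isCont (\<lambda>x. Gam x i j k) \<xi>s" for i j k
    using Ck_on_imp_isCont[OF chart xs_in smooth_on_imp_Ck_on[OF Gam_smooth]] .
  have Gs: "isCont (\<lambda>x. Gs x i j k) \<xi>s" for i j k
    using Ck_on_imp_isCont[OF chart xs_in smooth_on_imp_Ck_on[OF Gs_smooth]] .
  have "invertible (transpose (Hstar G Gs f \<xi>s))"
    unfolding invertible_iff_ker using Hess_pos by (metis inner_zero_left less_irrefl)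
  then obtain C where "\<forall>\<^sub>F x in nhds \<xi>s. (x \<in> \<Omega> \<and> invertible (transpose (Hstar G Gs f x))) \<and>
      norm (newton_step G Gam Gs f x - \<xi>s) \<le> C * (norm (x - \<xi>s))\<^sup>2"
    using newton_step_locally_quadratic[where Gam = Gam and Gs = Gs, OF chart xs_in a Gam Gs crit]
    by auto
  from quadratic_convergence_near_fixed_point[OF this] show ?thesis
    by blast
qed

end
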